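(* Let $Y$ be the set of functions $F(\gamma)=f(\gamma(s_1),\dots,\gamma(s_k))$, $\gamma\in C_0([0,1];\mathbb R^d)$, where $k\in\mathbb N$, $0<s_1<\dots<s_k=1$ with $s_1,\dots,s_k\in\{l/2^n:l\in\{1,\dots,2^n\}\}$ for some $n\in\mathbb N$, and $f\in C^\infty_p((\mathbb R^d)^k)$; and let $\tilde Y$ be the set of functions $F(\gamma)=f(\langle S_1,\gamma\rangle,\dots,\langle S_k,\gamma\rangle)$ with $k\in\mathbb N$, $f\in C^\infty_p(\mathbb R^k)$. Then $Y=\tilde Y$.
   Context: Fix $d\in\mathbb N$, $(e_j)$ standard basis of $\mathbb R^d$. $C_0([0,1];\mathbb R^d)$ is the space of continuous $\gamma:[0,1]\to\mathbb R^d$ with $\gamma(0)=0$. $C^\infty_p(\mathbb R^N)$ denotes the infinitely differentiable real functions all of whose partial derivatives are of at most polynomial growth. Haar functions: $H_1\equiv1$, and for $m\ge0$, $k=1,\dots,2^m$: $H_{2^m+k}=2^{m/2}$ on $[\frac{2k-2}{2^{m+1}},\frac{2k-1}{2^{m+1}})$, $-2^{m/2}$ on $[\frac{2k-1}{2^{m+1}},\frac{2k}{2^{m+1}})$, $0$ otherwise. $g_{d(r-1)+j}:=H_re_j$ ($r\in\mathbb N$, $1\le j\le d$), $S_i(s):=\int_0^sg_i(u)du$, and $\langle S_i,\gamma\rangle:=\int_0^1g_i(u)\cdot d\gamma_u$ (Stieltjes integral of the step function $g_i$). *)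

theory Defs
  imports "HOL-Analysis.Analysis"
begin

text \<open>Points of R^d are represented as functions nat => real whose
coordinates 0..d-1 are the (0-based) coordinates; coordinates >= d are 0.
Points of R^N (N = d*k or N = k) are likewise nat => real, and a function on R^N
is a function (nat => real) => real that only depends on the first N coordinates.\<close>

definition C0 :: "nat \<Rightarrow> (real \<Rightarrow> nat \<Rightarrow> real) set" where
  "C0 d = {\<gamma>. (\<forall>j<d. continuous_on {0..1} (\<lambda>t. \<gamma> t j)) \<and> (\<forall>j<d. \<gamma> 0 j = 0)
              \<and> (\<forall>t j. d \<le> j \<longrightarrow> \<gamma> t j = 0)}"

fun iter_pd :: "nat list \<Rightarrow> ((nat \<Rightarrow> real) \<Rightarrow> real) \<Rightarrow> (nat \<Rightarrow> real) \<Rightarrow> real" where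
  "iter_pd [] f = f"
| "iter_pd (i # is) f = (\<lambda>x. deriv (\<lambda>t. iter_pd is f (x(i := t))) (x i))"

definition normN :: "nat \<Rightarrow> (nat \<Rightarrow> real) \<Rightarrow> real" where
  "normN N x = sqrt (\<Sum>i<N. (x i)\<^sup>2)"

definition Cinf_p :: "nat \<Rightarrow> ((nat \<Rightarrow> real) \<Rightarrow> real) \<Rightarrow> bool" where
  "Cinf_p N f \<longleftrightarrow>
     (\<forall>x. f x = f (\<lambda>i. if i < N then x i else 0)) \<and>
     (\<forall>is. set is \<subseteq> {..<N} \<longrightarrow>
        (\<forall>x. \<forall>i<N. (\<lambda>t. iter_pd is f (x(i := t))) differentiable (at (x i))) \<and>
        continuous_on UNIV (iter_pd is f) \<and>
        (\<exists>C m. \<forall>x. \<bar>iter_pd is f x\<bar> \<le> C * (1 + normN N x) ^ m))"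

definition haar_mk :: "nat \<Rightarrow> nat \<Rightarrow> real \<Rightarrow> real" where
  "haar_mk m k u =
     (if (2*real k - 2) / 2^(m+1) \<le> u \<and> u < (2*real k - 1) / 2^(m+1) then 2 powr (real m / 2)
      else if (2*real k - 1) / 2^(m+1) \<le> u \<and> u < (2*real k) / 2^(m+1) then - (2 powr (real m / 2))
      else 0)"

definition haar :: "nat \<Rightarrow> real \<Rightarrow> real" where
  "haar r u = (if r = 1 then 1
     else (\<Sum>m<r. \<Sum>k\<in>{1..2^m}. if r = 2^m + k then haar_mk m k u else 0))"

definition stieltjes01 :: "(real \<Rightarrow> real) \<Rightarrow> (real \<Rightarrow> real) \<Rightarrow> real" where
  "stieltjes01 g c = lim (\<lambda>N. \<Sum>l<(2::nat)^N.
       g (real l / 2^N) * (c (real (l+1) / 2^N) - c (real l / 2^N)))"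

text \<open>Pairing <S_i, gamma> = int_0^1 g_i . d gamma, where g_{d(r-1)+j} = H_r e_j
(i >= 1, j in 1..d; in 0-based coordinates the component is (i-1) mod d).\<close>
definition pairing :: "nat \<Rightarrow> nat \<Rightarrow> (real \<Rightarrow> nat \<Rightarrow> real) \<Rightarrow> real" where
  "pairing d i \<gamma> = stieltjes01 (haar ((i - 1) div d + 1)) (\<lambda>t. \<gamma> t ((i - 1) mod d))"

definition Ycyl :: "nat \<Rightarrow> ((real \<Rightarrow> nat \<Rightarrow> real) \<Rightarrow> real) set" where
  "Ycyl d = {F. \<exists>(k::nat) (n::nat) (s::nat \<Rightarrow> real) f.
      k \<ge> 1 \<and> 0 < s 0 \<and> (\<forall>i j. i < j \<and> j < k \<longrightarrow> s i < s j) \<and> s (k - 1) = 1 \<and>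
      (\<forall>i<k. \<exists>l\<in>{1..(2::nat)^n}. s i = real l / 2^n) \<and>
      Cinf_p (d * k) f \<and>
      F = (\<lambda>\<gamma>. if \<gamma> \<in> C0 d
                then f (\<lambda>i. if i < d * k then \<gamma> (s (i div d)) (i mod d) else 0)
                else 0)}"

definition Ytilde :: "nat \<Rightarrow> ((real \<Rightarrow> nat \<Rightarrow> real) \<Rightarrow> real) set" where
  "Ytilde d = {F. \<exists>(k::nat) f. k \<ge> 1 \<and> Cinf_p k f \<and>
      F = (\<lambda>\<gamma>. if \<gamma> \<in> C0 d
                then f (\<lambda>i. if i < k then pairing d (Suc i) \<gamma> else 0)
                else 0)}"

end

theory Submission
  imports Defs
begin

text \<open>
  On paths vanishing at \<open>0\<close>, the pairing of \<open>\<gamma>\<close> with \<open>H\<^sub>1 e\<^sub>c\<close> is \<open>\<gamma>(1)\<^sub>c\<close>, and pairing with a Haar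
  function of level \<open>m\<close> is a multiple of the second difference
  \<open>2 \<gamma>(mid) - \<gamma>(left) - \<gamma>(right)\<close> over a dyadic interval of length \<open>2^-m\<close>. Hence the
  pairings \<open>\<langle>S\<^sub>i, \<gamma>\<rangle>\<close> with \<open>i \<le> d 2^n\<close> and the values \<open>\<gamma>(l/2^n)\<^sub>c\<close> are linear combinations of
  each other (by induction on \<open>n\<close>, solving the Schauder relation for the midpoint value).
  A cylinder function of one family of coordinates is thus \<open>f \<circ> A\<close> for a matrix \<open>A\<close> applied to
  the other family, and \<open>C\<^sup>\<infinity>\<^sub>p\<close> is invariant under \<open>f \<mapsto> f \<circ> A\<close>: by the chain rule every
  iterated partial derivative of \<open>f \<circ> A\<close> is a linear combination of those of \<open>f\<close> composed
  with \<open>A\<close>, and \<open>|A x| \<le> \<parallel>A\<parallel> |x|\<close> preserves polynomial growth.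
\<close>

section \<open>Partial derivatives along lines\<close>

definition partial_deriv :: "nat \<Rightarrow> ((nat \<Rightarrow> real) \<Rightarrow> real) \<Rightarrow> (nat \<Rightarrow> real) \<Rightarrow> real" where
  "partial_deriv j h x = deriv (\<lambda>t. h (x(j := t))) (x j)"

lemma iter_pd_Cons: "iter_pd (j # js) f = partial_deriv j (iter_pd js f)"
  by (simp add: partial_deriv_def fun_eq_iff)

lemma DERIV_partial:
  assumes "\<And>x. (\<lambda>t. h (x(j := t))) differentiable (at (x j))"
  shows "((\<lambda>t. h (x(j := t))) has_real_derivative partial_deriv j h (x(j := t))) (at t)"
  using assms[of "x(j := t)"] by (simp add: partial_deriv_def DERIV_deriv_iff_real_differentiable)

lemma MVT_unordered:
  fixes g g' :: "real \<Rightarrow> real"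
  assumes "\<And>t. (g has_real_derivative g' t) (at t)"
  shows "\<exists>\<xi>. \<bar>\<xi> - a\<bar> \<le> \<bar>b - a\<bar> \<and> g b - g a = (b - a) * g' \<xi>"
proof (cases a b rule: linorder_cases)
  case less
  with MVT2[OF less, of g g'] assms show ?thesis
    by (metis abs_of_pos diff_gt_0_iff_gt diff_strict_right_mono less_imp_le)
next
  case greater
  with MVT2[OF greater, of g g'] assms obtain z where "b < z" "z < a" "g a - g b = (a - b) * g' z"
    by blast
  then show ?thesis by (intro exI[of _ z]) (auto simp: algebra_simps)
qed simp

lemma tendsto_fun_componentwise:
  fixes f :: "'a \<Rightarrow> 'b \<Rightarrow> real"
  assumes "\<And>i. ((\<lambda>c. f c i) \<longlongrightarrow> l i) F"
  shows "(f \<longlongrightarrow> l) F"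
proof -
  have "limitin (product_topology (\<lambda>i. euclidean) UNIV) f l F"
    using assms by (subst limitin_componentwise) auto
  then show ?thesis by (simp add: euclidean_product_topology)
qed

definition shift_prefix :: "(nat \<Rightarrow> real) \<Rightarrow> (nat \<Rightarrow> real) \<Rightarrow> nat \<Rightarrow> real \<Rightarrow> nat \<Rightarrow> real" where
  "shift_prefix y v n s = (\<lambda>j. if j < n then y j + s * v j else y j)"

lemma shift_prefix_0 [simp]: "shift_prefix y v n 0 = y"
  by (simp add: shift_prefix_def fun_eq_iff)

text \<open>Mean value theorem in coordinate \<open>n\<close>: the intermediate points tend to \<open>y\<close>, so the
  continuity of \<open>\<partial>\<^sub>n h\<close> yields the derivative.\<close>
lemma DERIV_shift_prefix_Suc:
  assumes diff: "\<And>x. (\<lambda>t. h (x(n := t))) differentiable (at (x n))"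
    and cont: "continuous_on UNIV (partial_deriv n h)"
  shows "((\<lambda>s. h (shift_prefix y v (Suc n) s) - h (shift_prefix y v n s))
           has_real_derivative v n * partial_deriv n h y) (at 0)"
proof -
  let ?z = "shift_prefix y v n"
  have z_Suc: "shift_prefix y v (Suc n) s = (?z s)(n := y n + s * v n)" for s
    by (auto simp: shift_prefix_def fun_eq_iff)
  have z_n: "(?z s)(n := y n) = ?z s" for s
    by (auto simp: shift_prefix_def fun_eq_iff)
  have "\<exists>\<xi>. \<bar>\<xi> - y n\<bar> \<le> \<bar>(y n + s * v n) - y n\<bar> \<and> h ((?z s)(n := y n + s * v n)) - h ((?z s)(n := y n))
      = ((y n + s * v n) - y n) * partial_deriv n h ((?z s)(n := \<xi>))" for s
    by (rule MVT_unordered, rule DERIV_partial[OF diff])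
  then obtain \<xi> where \<xi>_close: "\<And>s. \<bar>\<xi> s - y n\<bar> \<le> \<bar>s * v n\<bar>"
    and \<xi>_eq: "\<And>s. h (shift_prefix y v (Suc n) s) - h (?z s) = (s * v n) * partial_deriv n h ((?z s)(n := \<xi> s))"
    unfolding z_Suc z_n by (metis add_diff_cancel_left')
  define w where "w s = (?z s)(n := \<xi> s)" for s
  have "(w \<longlongrightarrow> y) (at 0)"
  proof (rule tendsto_fun_componentwise)
    fix i
    show "((\<lambda>s. w s i) \<longlongrightarrow> y i) (at 0)"
    proof (cases "i = n")
      case True
      have "((\<lambda>s. \<xi> s - y n) \<longlongrightarrow> 0) (at 0)"
      proof (rule Lim_null_comparison)
        show "\<forall>\<^sub>F s in at 0. norm (\<xi> s - y n) \<le> \<bar>s * v n\<bar>" using \<xi>_close by auto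
        show "((\<lambda>s. \<bar>s * v n\<bar>) \<longlongrightarrow> 0) (at (0::real))"
          by (auto intro!: tendsto_eq_intros)
      qed
      then show ?thesis using True by (simp add: w_def LIM_zero_iff)
    next
      case False
      then show ?thesis
        by (cases "i < n") (auto simp: w_def shift_prefix_def intro!: tendsto_eq_intros)
    qed
  qed
  then have "((\<lambda>s. v n * partial_deriv n h (w s)) \<longlongrightarrow> v n * partial_deriv n h y) (at 0)"
    using cont by (intro tendsto_intros isCont_tendsto_compose[where g = "partial_deriv n h"])
      (auto simp: continuous_on_eq_continuous_at)
  moreover have "\<forall>\<^sub>F s in at 0. v n * partial_deriv n h (w s) =
      ((h (shift_prefix y v (Suc n) s) - h (?z s)) - (h (shift_prefix y v (Suc n) 0) - h (?z 0))) / (s - 0)"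
    unfolding eventually_at_filter by (intro always_eventually allI impI) (simp add: \<xi>_eq w_def)
  ultimately show ?thesis
    unfolding has_field_derivative_iff by (rule Lim_transform_eventually)
qed

lemma DERIV_shift_prefix:
  assumes diff: "\<And>x j. j < N \<Longrightarrow> (\<lambda>t. h (x(j := t))) differentiable (at (x j))"
    and cont: "\<And>j. j < N \<Longrightarrow> continuous_on UNIV (partial_deriv j h)"
  shows "((\<lambda>s. h (shift_prefix y v N s)) has_real_derivative (\<Sum>j<N. v j * partial_deriv j h y)) (at 0)"
proof -
  have "n \<le> N \<Longrightarrow> ((\<lambda>s. h (shift_prefix y v n s)) has_real_derivative (\<Sum>j<n. v j * partial_deriv j h y)) (at 0)"
    for n
  proof (induction n)
    case 0
    show ?case by (simp add: shift_prefix_def)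
  next
    case (Suc n)
    have "((\<lambda>s. (h (shift_prefix y v (Suc n) s) - h (shift_prefix y v n s)) + h (shift_prefix y v n s))
        has_real_derivative v n * partial_deriv n h y + (\<Sum>j<n. v j * partial_deriv j h y)) (at 0)"
      using Suc by (intro DERIV_add DERIV_shift_prefix_Suc diff cont) auto
    then show ?case by (simp add: add.commute)
  qed
  then show ?thesis by simp
qed

section \<open>Composition with linear maps\<close>

definition linmap :: "(nat \<Rightarrow> nat \<Rightarrow> real) \<Rightarrow> nat \<Rightarrow> nat \<Rightarrow> (nat \<Rightarrow> real) \<Rightarrow> nat \<Rightarrow> real" where
  "linmap a N M x = (\<lambda>j. if j < N then \<Sum>k<M. a j k * x k else 0)"

lemma linmap_fun_upd:
  assumes "i < M"
  shows "linmap a N M (x(i := t)) = shift_prefix (linmap a N M x) (\<lambda>j. a j i) N (t - x i)"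
proof -
  have "(\<Sum>k<M. a j k * (x(i := t)) k) = (\<Sum>k<M. a j k * x k) + (t - x i) * a j i" for j
  proof -
    have "(\<Sum>k<M. a j k * (x(i := t)) k) = (\<Sum>k<M. a j k * x k + (if k = i then a j i * (t - x i) else 0))"
      by (intro sum.cong) (auto simp: algebra_simps)
    then show ?thesis
      using assms by (simp add: sum.distrib algebra_simps)
  qed
  then show ?thesis by (auto simp: linmap_def shift_prefix_def fun_eq_iff)
qed

lemma linmap_truncate: "linmap a N M (\<lambda>i. if i < M then x i else 0) = linmap a N M x"
  by (auto simp: linmap_def fun_eq_iff intro!: sum.cong)

lemma continuous_on_linmap: "continuous_on UNIV (linmap a N M)"
  unfolding linmap_def
proof (intro continuous_on_coordinatewise_then_product)
  fix j show "continuous_on UNIV (\<lambda>x. if j < N then \<Sum>k<M. a j k * x k else 0)"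
    by (cases "j < N") (auto intro!: continuous_intros)
qed

lemma DERIV_comp_linmap:
  assumes diff: "\<And>x j. j < N \<Longrightarrow> (\<lambda>t. h (x(j := t))) differentiable (at (x j))"
    and cont: "\<And>j. j < N \<Longrightarrow> continuous_on UNIV (partial_deriv j h)"
    and "i < M"
  shows "((\<lambda>t. h (linmap a N M (x(i := t)))) has_real_derivative
           (\<Sum>j<N. a j i * partial_deriv j h (linmap a N M x))) (at (x i))"
proof -
  let ?F = "\<lambda>s. h (shift_prefix (linmap a N M x) (\<lambda>j. a j i) N s)"
  have "((\<lambda>s. ?F ((s + x i) - x i)) has_real_derivative (\<Sum>j<N. a j i * partial_deriv j h (linmap a N M x))) (at 0)"
    using DERIV_shift_prefix[OF diff cont] by simp
  then have "((\<lambda>t. ?F (t - x i)) has_real_derivative (\<Sum>j<N. a j i * partial_deriv j h (linmap a N M x))) (at (0 + x i))"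
    by (subst DERIV_shift) simp
  then show ?thesis
    using \<open>i < M\<close> by (simp add: linmap_fun_upd)
qed

definition poly_growth :: "nat \<Rightarrow> ((nat \<Rightarrow> real) \<Rightarrow> real) \<Rightarrow> bool" where
  "poly_growth N \<phi> \<longleftrightarrow> (\<exists>C m. \<forall>x. \<bar>\<phi> x\<bar> \<le> C * (1 + normN N x) ^ m)"

lemma Cinf_p_iff:
  "Cinf_p N f \<longleftrightarrow>
     (\<forall>x. f x = f (\<lambda>i. if i < N then x i else 0)) \<and>
     (\<forall>is. set is \<subseteq> {..<N} \<longrightarrow>
        (\<forall>x. \<forall>i<N. (\<lambda>t. iter_pd is f (x(i := t))) differentiable (at (x i))) \<and>
        continuous_on UNIV (iter_pd is f) \<and> poly_growth N (iter_pd is f))"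
  by (simp add: Cinf_p_def poly_growth_def)

lemma normN_nonneg: "normN N x \<ge> 0"
  by (simp add: normN_def sum_nonneg)

lemma abs_le_normN:
  assumes "k < N"
  shows "\<bar>x k\<bar> \<le> normN N x"
proof -
  have "(x k)\<^sup>2 \<le> (\<Sum>i<N. (x i)\<^sup>2)"
    using assms by (intro member_le_sum) auto
  then show ?thesis
    unfolding normN_def by (metis real_sqrt_abs real_sqrt_le_mono)
qed

lemma normN_le_sum_abs: "normN N x \<le> (\<Sum>j<N. \<bar>x j\<bar>)"
  using L2_set_le_sum_abs[of x "{..<N}"] by (simp add: normN_def L2_set_def)

lemma poly_growth_add:
  assumes "poly_growth N \<phi>" "poly_growth N \<psi>"
  shows "poly_growth N (\<lambda>x. \<phi> x + \<psi> x)"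
proof -
  obtain C1 m1 where 1: "\<And>x. \<bar>\<phi> x\<bar> \<le> C1 * (1 + normN N x) ^ m1"
    using assms(1) by (auto simp: poly_growth_def)
  obtain C2 m2 where 2: "\<And>x. \<bar>\<psi> x\<bar> \<le> C2 * (1 + normN N x) ^ m2"
    using assms(2) by (auto simp: poly_growth_def)
  have "\<bar>\<phi> x + \<psi> x\<bar> \<le> (\<bar>C1\<bar> + \<bar>C2\<bar>) * (1 + normN N x) ^ (m1 + m2)" for x
  proof -
    define w where "w = 1 + normN N x"
    have "w \<ge> 1" using normN_nonneg[of N x] by (simp add: w_def)
    then have "w ^ m1 \<le> w ^ (m1 + m2)" "w ^ m2 \<le> w ^ (m1 + m2)"
      by (auto intro!: power_increasing)
    then have "C1 * w ^ m1 \<le> \<bar>C1\<bar> * w ^ (m1 + m2)" "C2 * w ^ m2 \<le> \<bar>C2\<bar> * w ^ (m1 + m2)"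
      using \<open>w \<ge> 1\<close> by (meson abs_ge_self abs_ge_zero mult_mono order.trans zero_le_power zero_le_one)+
    then show ?thesis
      using 1[of x] 2[of x] by (simp add: w_def algebra_simps)
  qed
  then show ?thesis by (auto simp: poly_growth_def)
qed

lemma poly_growth_cmult:
  assumes "poly_growth N \<phi>"
  shows "poly_growth N (\<lambda>x. c * \<phi> x)"
proof -
  obtain C m where "\<And>x. \<bar>\<phi> x\<bar> \<le> C * (1 + normN N x) ^ m"
    using assms by (auto simp: poly_growth_def)
  then have "\<bar>c * \<phi> x\<bar> \<le> (\<bar>c\<bar> * C) * (1 + normN N x) ^ m" for x
    by (simp add: abs_mult mult.assoc mult_left_mono)
  then show ?thesis by (auto simp: poly_growth_def)
qed

lemma poly_growth_sum:
  assumes "finite J" "\<And>j. j \<in> J \<Longrightarrow> poly_growth N (\<phi> j)"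
  shows "poly_growth N (\<lambda>x. \<Sum>j\<in>J. \<phi> j x)"
  using assms
proof (induction J rule: finite_induct)
  case empty
  show ?case by (auto simp: poly_growth_def intro!: exI[of _ 0])
next
  case (insert j J)
  then show ?case by (simp add: poly_growth_add)
qed

lemma normN_linmap_le: "\<exists>K. \<forall>x. 1 + normN N (linmap a N M x) \<le> K * (1 + normN M x)"
proof -
  define A where "A = (\<Sum>j<N. \<Sum>k<M. \<bar>a j k\<bar>)"
  have "A \<ge> 0" by (simp add: A_def sum_nonneg)
  have bound: "normN N (linmap a N M x) \<le> A * normN M x" for x
  proof -
    have "\<bar>linmap a N M x j\<bar> \<le> (\<Sum>k<M. \<bar>a j k\<bar>) * normN M x" if "j < N" for j
    proof -
      have "\<bar>\<Sum>k<M. a j k * x k\<bar> \<le> (\<Sum>k<M. \<bar>a j k\<bar> * normN M x)"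
        by (rule order.trans[OF sum_abs sum_mono])
          (auto simp: abs_mult intro!: mult_left_mono abs_le_normN)
      with that show ?thesis by (simp add: linmap_def sum_distrib_right)
    qed
    then have "(\<Sum>j<N. \<bar>linmap a N M x j\<bar>) \<le> A * normN M x"
      unfolding A_def sum_distrib_right by (intro sum_mono) auto
    then show ?thesis using normN_le_sum_abs order.trans by blast
  qed
  have "1 + normN N (linmap a N M x) \<le> (1 + A) * (1 + normN M x)" for x
    using bound[of x] \<open>A \<ge> 0\<close> normN_nonneg[of M x] by (simp add: algebra_simps)
  then show ?thesis by blast
qed

lemma poly_growth_comp_linmap:
  assumes "poly_growth N \<phi>"
  shows "poly_growth M (\<lambda>x. \<phi> (linmap a N M x))"
proof -
  obtain C m where Cm: "\<And>y. \<bar>\<phi> y\<bar> \<le> C * (1 + normN N y) ^ m"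
    using assms by (auto simp: poly_growth_def)
  obtain K where K: "\<And>x. 1 + normN N (linmap a N M x) \<le> K * (1 + normN M x)"
    using normN_linmap_le by blast
  have "C \<ge> 0"
  proof -
    have "0 \<le> C * (1 + normN N (\<lambda>_. 0)) ^ m" using Cm[of "\<lambda>_. 0"] by linarith
    moreover have "(1 + normN N (\<lambda>_. 0)) ^ m > 0" using normN_nonneg[of N "\<lambda>_. 0"] by simp
    ultimately show ?thesis by (simp add: zero_le_mult_iff)
  qed
  have "\<bar>\<phi> (linmap a N M x)\<bar> \<le> (C * K ^ m) * (1 + normN M x) ^ m" for x
  proof -
    have "(1 + normN N (linmap a N M x)) ^ m \<le> (K * (1 + normN M x)) ^ m"
      using K[of x] normN_nonneg[of N "linmap a N M x"] by (intro power_mono) auto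
    then have "C * (1 + normN N (linmap a N M x)) ^ m \<le> C * (K * (1 + normN M x)) ^ m"
      using \<open>C \<ge> 0\<close> by (rule mult_left_mono)
    then show ?thesis using Cm[of "linmap a N M x"] by (simp only: power_mult_distrib mult.assoc)
  qed
  then show ?thesis by (auto simp: poly_growth_def)
qed

lemma Cinf_p_iter_pd:
  assumes "Cinf_p N f" "set is \<subseteq> {..<N}"
  shows "\<And>x i. i < N \<Longrightarrow> (\<lambda>t. iter_pd is f (x(i := t))) differentiable (at (x i))"
    and "continuous_on UNIV (iter_pd is f)"
    and "poly_growth N (iter_pd is f)"
  using assms unfolding Cinf_p_iff by blast+

lemma DERIV_iter_pd_comp_linmap:
  assumes f: "Cinf_p N f" and js: "set js \<subseteq> {..<N}" and "i < M"
  shows "((\<lambda>t. iter_pd js f (linmap a N M (x(i := t)))) has_real_derivative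
           (\<Sum>j<N. a j i * iter_pd (j # js) f (linmap a N M x))) (at (x i))"
  unfolding iter_pd_Cons
proof (rule DERIV_comp_linmap[OF Cinf_p_iter_pd(1)[OF f js] _ \<open>i < M\<close>])
  fix j assume "j < N"
  with js have "set (j # js) \<subseteq> {..<N}" by simp
  from Cinf_p_iter_pd(2)[OF f this] show "continuous_on UNIV (partial_deriv j (iter_pd js f))"
    by (simp only: iter_pd_Cons)
qed

lemma DERIV_sum_iter_pd_comp_linmap:
  assumes "Cinf_p N f" "finite J" "\<forall>js\<in>J. set js \<subseteq> {..<N}" "i < M"
  shows "((\<lambda>t. \<Sum>js\<in>J. c js * iter_pd js f (linmap a N M (x(i := t)))) has_real_derivative
           (\<Sum>js\<in>J. c js * (\<Sum>j<N. a j i * iter_pd (j # js) f (linmap a N M x)))) (at (x i))"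
  using assms by (intro DERIV_sum DERIV_cmult DERIV_iter_pd_comp_linmap) auto

lemma iter_pd_comp_linmap_expansion:
  assumes f: "Cinf_p N f" and "set is \<subseteq> {..<M}"
  shows "\<exists>J c. finite J \<and> (\<forall>js\<in>J. set js \<subseteq> {..<N}) \<and>
    iter_pd is (\<lambda>x. f (linmap a N M x)) = (\<lambda>x. \<Sum>js\<in>J. c js * iter_pd js f (linmap a N M x))"
  using assms(2)
proof (induction "is")
  case Nil
  show ?case by (intro exI[of _ "{[]}"] exI[of _ "\<lambda>_. 1"]) auto
next
  case (Cons i "is")
  then obtain J c where J: "finite J" "\<forall>js\<in>J. set js \<subseteq> {..<N}"
    and expansion: "iter_pd is (\<lambda>x. f (linmap a N M x)) = (\<lambda>x. \<Sum>js\<in>J. c js * iter_pd js f (linmap a N M x))"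
    by auto
  have "i < M" using Cons.prems by simp
  define J' where "J' = (\<lambda>(j, js). j # js) ` ({..<N} \<times> J)"
  define c' where "c' ys = a (hd ys) i * c (tl ys)" for ys
  have "iter_pd (i # is) (\<lambda>x. f (linmap a N M x)) x = (\<Sum>ys\<in>J'. c' ys * iter_pd ys f (linmap a N M x))" for x
  proof -
    from DERIV_sum_iter_pd_comp_linmap[OF f J \<open>i < M\<close>]
    have "iter_pd (i # is) (\<lambda>x. f (linmap a N M x)) x =
        (\<Sum>js\<in>J. c js * (\<Sum>j<N. a j i * iter_pd (j # js) f (linmap a N M x)))"
      unfolding iter_pd.simps(2)[of i "is"] expansion by (rule DERIV_imp_deriv)
    also have "\<dots> = (\<Sum>(j, js)\<in>{..<N} \<times> J. c' (j # js) * iter_pd (j # js) f (linmap a N M x))"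
      unfolding sum.cartesian_product[symmetric] sum.swap[of _ J] sum_distrib_left
      by (simp add: c'_def ac_simps)
    also have "\<dots> = (\<Sum>ys\<in>J'. c' ys * iter_pd ys f (linmap a N M x))"
      unfolding J'_def by (subst sum.reindex) (auto simp: inj_on_def case_prod_beta)
    finally show ?thesis .
  qed
  moreover have "finite J'" "\<forall>ys\<in>J'. set ys \<subseteq> {..<N}"
    using J by (auto simp: J'_def)
  ultimately show ?case by blast
qed

lemma Cinf_p_comp_linmap:
  assumes f: "Cinf_p N f"
  shows "Cinf_p M (\<lambda>x. f (linmap a N M x))"
proof -
  have "(\<forall>x. \<forall>i<M. (\<lambda>t. iter_pd is (\<lambda>x. f (linmap a N M x)) (x(i := t))) differentiable (at (x i))) \<and>
      continuous_on UNIV (iter_pd is (\<lambda>x. f (linmap a N M x))) \<and>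
      poly_growth M (iter_pd is (\<lambda>x. f (linmap a N M x)))"
    if "set is \<subseteq> {..<M}" for "is"
  proof -
    from iter_pd_comp_linmap_expansion[OF f \<open>set is \<subseteq> {..<M}\<close>, where a = a]
    obtain J c where J: "finite J" "\<forall>js\<in>J. set js \<subseteq> {..<N}"
      and expansion: "iter_pd is (\<lambda>x. f (linmap a N M x)) = (\<lambda>x. \<Sum>js\<in>J. c js * iter_pd js f (linmap a N M x))"
      by blast
    have f_pd: "continuous_on UNIV (iter_pd js f)" "poly_growth N (iter_pd js f)" if "js \<in> J" for js
      using J(2) that by (simp_all add: Cinf_p_iter_pd(2,3)[OF f])
    have "(\<lambda>t. iter_pd is (\<lambda>x. f (linmap a N M x)) (x(i := t))) differentiable (at (x i))" if "i < M" for x i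
      using DERIV_sum_iter_pd_comp_linmap[OF f J that, where c = c and x = x] unfolding expansion real_differentiable_def
      by (rule exI)
    moreover have "continuous_on UNIV (iter_pd is (\<lambda>x. f (linmap a N M x)))"
      unfolding expansion
    proof (intro continuous_on_sum continuous_on_mult continuous_on_const)
      fix js assume "js \<in> J"
      from continuous_on_compose2[OF f_pd(1)[OF this] continuous_on_linmap]
      show "continuous_on UNIV (\<lambda>x. iter_pd js f (linmap a N M x))" by simp
    qed
    moreover have "poly_growth M (iter_pd is (\<lambda>x. f (linmap a N M x)))"
      unfolding expansion
      by (intro poly_growth_sum poly_growth_cmult poly_growth_comp_linmap f_pd(2) J(1))
    ultimately show ?thesis by blast
  qed
  then show ?thesis
    unfolding Cinf_p_iff by (simp add: linmap_truncate)
qed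

section \<open>Stieltjes integrals of dyadic step functions\<close>

definition dyadic_sum :: "(real \<Rightarrow> real) \<Rightarrow> (real \<Rightarrow> real) \<Rightarrow> nat \<Rightarrow> real" where
  "dyadic_sum g c N = (\<Sum>l<(2::nat)^N. g (real l / 2^N) * (c (real (l+1) / 2^N) - c (real l / 2^N)))"

lemma sum_lessThan_double:
  fixes F :: "nat \<Rightarrow> 'a::comm_monoid_add"
  shows "(\<Sum>l<2*n. F l) = (\<Sum>a<n. F (2*a) + F (2*a+1))"
  by (induction n) (simp_all add: sum.distrib algebra_simps)

lemma dyadic_sum_Suc:
  assumes "\<And>a. a < 2^N \<Longrightarrow> g (real (2*a+1) / 2^Suc N) = g (real a / 2^N)"
  shows "dyadic_sum g c (Suc N) = dyadic_sum g c N"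
proof -
  have even: "real (2*a) / 2^Suc N = real a / 2^N" for a :: nat
    by simp
  have next_even: "real (2*a+1+1) / 2^Suc N = real (a+1) / 2^N" for a :: nat
    by (simp add: field_simps)
  have "dyadic_sum g c (Suc N) =
      (\<Sum>a<2^N. g (real (2*a) / 2^Suc N) * (c (real (2*a+1) / 2^Suc N) - c (real (2*a) / 2^Suc N))
        + g (real (2*a+1) / 2^Suc N) * (c (real (2*a+1+1) / 2^Suc N) - c (real (2*a+1) / 2^Suc N)))"
    unfolding dyadic_sum_def power_Suc by (rule sum_lessThan_double)
  also have "\<dots> = dyadic_sum g c N"
    unfolding dyadic_sum_def even next_even using assms by (intro sum.cong) (auto simp: algebra_simps)
  finally show ?thesis .
qed

lemma floor_dyadic_refine:
  assumes "L \<le> N"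
  shows "\<lfloor>2^L * (real (2*a+1) / 2^Suc N)\<rfloor> = \<lfloor>2^L * (real a / 2^N)\<rfloor>"
proof -
  have split: "(2::real)^N = 2^L * 2^(N-L)"
    using assms by (simp flip: power_add)
  have "(2::real)^L * (real (2*a+1) / 2^Suc N) = real (2*a+1) / real (2 * 2^(N-L))"
    by (simp add: split)
  moreover have "(2::real)^L * (real a / 2^N) = real a / real (2^(N-L))"
    by (simp add: split)
  ultimately show ?thesis
    by (simp only: floor_divide_of_nat_eq div_mult2_eq) simp
qed

lemma stieltjes01_dyadic_step:
  assumes "\<And>u v. \<lfloor>2^L * u\<rfloor> = \<lfloor>2^L * v\<rfloor> \<Longrightarrow> g u = g v"
  shows "stieltjes01 g c = dyadic_sum g c L"
proof -
  have stable: "dyadic_sum g c N = dyadic_sum g c L" if "L \<le> N" for N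
    using that
  proof (induction N rule: dec_induct)
    case (step N)
    have "dyadic_sum g c (Suc N) = dyadic_sum g c N"
    proof (rule dyadic_sum_Suc)
      fix a
      show "g (real (2*a+1) / 2^Suc N) = g (real a / 2^N)"
        by (rule assms) (rule floor_dyadic_refine[OF \<open>L \<le> N\<close>])
    qed
    then show ?case using step.IH by simp
  qed simp
  have "eventually (\<lambda>N. dyadic_sum g c N = dyadic_sum g c L) sequentially"
    unfolding eventually_sequentially using stable by blast
  then have "lim (dyadic_sum g c) = dyadic_sum g c L"
    by (intro limI tendsto_eventually)
  then show ?thesis
    unfolding stieltjes01_def dyadic_sum_def[symmetric] .
qed

lemma stieltjes01_haar_1: "stieltjes01 (haar 1) c = c 1 - c 0"
proof -
  have "stieltjes01 (haar 1) c = dyadic_sum (haar 1) c 0"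
    by (rule stieltjes01_dyadic_step) (simp add: haar_def)
  then show ?thesis by (simp add: dyadic_sum_def haar_def)
qed

lemma haar_mk_floor:
  "haar_mk m k u = (if \<lfloor>2^(m+1) * u\<rfloor> = 2 * int k - 2 then 2 powr (real m / 2)
     else if \<lfloor>2^(m+1) * u\<rfloor> = 2 * int k - 1 then - (2 powr (real m / 2)) else 0)"
proof -
  have p: "(0::real) < 2^(m+1)" by simp
  have first_half: "(2 * real k - 2) / 2^(m+1) \<le> u \<and> u < (2 * real k - 1) / 2^(m+1) \<longleftrightarrow>
      \<lfloor>2^(m+1) * u\<rfloor> = 2 * int k - 2"
    unfolding floor_eq_iff pos_divide_le_eq[OF p] pos_less_divide_eq[OF p] by (simp add: mult.commute)
  have second_half: "(2 * real k - 1) / 2^(m+1) \<le> u \<and> u < (2 * real k) / 2^(m+1) \<longleftrightarrow>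
      \<lfloor>2^(m+1) * u\<rfloor> = 2 * int k - 1"
    unfolding floor_eq_iff pos_divide_le_eq[OF p] pos_less_divide_eq[OF p] by (simp add: mult.commute)
  show ?thesis
    unfolding haar_mk_def first_half second_half ..
qed

lemma stieltjes01_haar_mk:
  assumes "Suc j \<le> 2^m"
  shows "stieltjes01 (haar_mk m (Suc j)) c = 2 powr (real m / 2) *
    (2 * c (real (2*j+1) / 2^(m+1)) - c (real (2*j) / 2^(m+1)) - c (real (2*j+2) / 2^(m+1)))"
proof -
  define A where "A = (2::real) powr (real m / 2)"
  define D where "D l = c (real (l+1) / 2^(m+1)) - c (real l / 2^(m+1))" for l
  have summand: "haar_mk m (Suc j) (real l / 2^(m+1)) * D l =
      (if l = 2*j then A * D l else 0) + (if l = 2*j+1 then - A * D l else 0)" for l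
  proof -
    have grid: "\<lfloor>2^(m+1) * (real l / 2^(m+1))\<rfloor> = int l"
      by simp
    show ?thesis
      unfolding haar_mk_floor grid by (auto simp: A_def)
  qed
  have "2*j+1 < 2^(m+1)"
    using assms by simp
  have "stieltjes01 (haar_mk m (Suc j)) c = dyadic_sum (haar_mk m (Suc j)) c (m+1)"
    by (rule stieltjes01_dyadic_step) (unfold haar_mk_floor, simp only:)
  also have "\<dots> = (\<Sum>l<2^(m+1). haar_mk m (Suc j) (real l / 2^(m+1)) * D l)"
    unfolding dyadic_sum_def D_def ..
  also have "\<dots> = A * D (2*j) - A * D (2*j+1)"
    unfolding summand using \<open>2*j+1 < 2^(m+1)\<close> by (simp add: sum.distrib)
  finally show ?thesis
    by (simp add: D_def A_def add.assoc right_diff_distrib)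
qed

lemma haar_eq_haar_mk:
  assumes "1 \<le> k" "k \<le> 2^m"
  shows "haar (2^m + k) = haar_mk m k"
proof
  fix u
  have level_unique: "m' = m" if "2^m' + k' = (2::nat)^m + k" "1 \<le> k'" "k' \<le> 2^m'" for m' k'
  proof -
    have "m' < m + 1"
      by (rule power_less_imp_less_exp[of "2::nat"]) (use that assms in simp_all)
    moreover have "m < m' + 1"
      by (rule power_less_imp_less_exp[of "2::nat"]) (use that assms in simp_all)
    ultimately show ?thesis by simp
  qed
  have "(\<Sum>m'<2^m+k. \<Sum>k'\<in>{1..2^m'}. if 2^m + k = 2^m' + k' then haar_mk m' k' u else 0) =
        (\<Sum>m'<2^m+k. if m' = m then haar_mk m k u else 0)"
  proof (intro sum.cong refl)
    fix m' assume "m' \<in> {..<2^m+k}"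
    show "(\<Sum>k'\<in>{1..2^m'}. if 2^m + k = 2^m' + k' then haar_mk m' k' u else 0) =
          (if m' = m then haar_mk m k u else 0)"
    proof (cases "m' = m")
      case True
      then have "(\<Sum>k'\<in>{1..2^m'}. if 2^m + k = 2^m' + k' then haar_mk m' k' u else 0) =
            (\<Sum>k'\<in>{1..2^m}. if k' = k then haar_mk m k u else 0)"
        by (intro sum.cong) auto
      with True assms show ?thesis by simp
    next
      case False
      then show ?thesis using level_unique by (auto intro!: sum.neutral)
    qed
  qed
  moreover have "m < 2^m + k"
    using less_exp[of m] by linarith
  ultimately show "haar (2^m + k) u = haar_mk m k u"
    using assms by (simp add: haar_def)
qed

lemma haar_index_cases:
  assumes "2 \<le> r"
  shows "\<exists>m j. r = 2^m + Suc j \<and> Suc j \<le> 2^m"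
  using assms
proof (induction r rule: dec_induct)
  case base
  show ?case by (intro exI[of _ 0]) auto
next
  case (step r)
  then obtain m j where mj: "r = 2^m + Suc j" "Suc j \<le> 2^m" by blast
  show ?case
  proof (cases "Suc j < 2^m")
    case True
    with mj show ?thesis by (intro exI[of _ m] exI[of _ "Suc j"]) auto
  next
    case False
    with mj show ?thesis by (intro exI[of _ "Suc m"] exI[of _ 0]) auto
  qed
qed

lemma pairing_Suc: "pairing d (Suc i) \<gamma> = stieltjes01 (haar (i div d + 1)) (\<lambda>t. \<gamma> t (i mod d))"
  by (simp add: pairing_def)

lemma pairing_level_0:
  assumes "i div d = 0"
  shows "pairing d (Suc i) \<gamma> = \<gamma> 1 (i mod d) - \<gamma> 0 (i mod d)"
  using assms stieltjes01_haar_1 by (simp add: pairing_Suc)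

lemma pairing_haar_mk:
  assumes "i div d = 2^m + j" "Suc j \<le> 2^m"
  shows "pairing d (Suc i) \<gamma> = 2 powr (real m / 2) *
    (2 * \<gamma> (real (2*j+1) / 2^(m+1)) (i mod d) - \<gamma> (real (2*j) / 2^(m+1)) (i mod d)
       - \<gamma> (real (2*j+2) / 2^(m+1)) (i mod d))"
proof -
  have "haar (i div d + 1) = haar_mk m (Suc j)"
    using haar_eq_haar_mk[of "Suc j" m] assms by simp
  then show ?thesis
    using assms(2) by (simp add: pairing_Suc stieltjes01_haar_mk)
qed

lemma C0_at_0: "\<gamma> \<in> C0 d \<Longrightarrow> c < d \<Longrightarrow> \<gamma> 0 c = 0"
  by (simp add: C0_def)

section \<open>Pairings and dyadic values span each other\<close>

definition lincomb_on :: "'a set \<Rightarrow> nat \<Rightarrow> (nat \<Rightarrow> 'a \<Rightarrow> real) \<Rightarrow> ('a \<Rightarrow> real) \<Rightarrow> bool" where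
  "lincomb_on S K b \<phi> \<longleftrightarrow> (\<exists>e. \<forall>x\<in>S. \<phi> x = (\<Sum>i<K. e i * b i x))"

lemma lincomb_on_cong:
  "lincomb_on S K b \<psi> \<Longrightarrow> (\<And>x. x \<in> S \<Longrightarrow> \<phi> x = \<psi> x) \<Longrightarrow> lincomb_on S K b \<phi>"
  unfolding lincomb_on_def by metis

lemma lincomb_on_zero: "lincomb_on S K b (\<lambda>x. 0)"
  unfolding lincomb_on_def by (intro exI[of _ "\<lambda>_. 0"]) simp

lemma lincomb_on_basis:
  assumes "i < K"
  shows "lincomb_on S K b (b i)"
  unfolding lincomb_on_def
proof (intro exI[of _ "\<lambda>i'. if i' = i then 1 else 0"] ballI)
  fix x
  have "(\<Sum>i'<K. (if i' = i then 1 else 0) * b i' x) = (\<Sum>i'<K. if i' = i then b i' x else 0)"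
    by (intro sum.cong) auto
  with assms show "b i x = (\<Sum>i'<K. (if i' = i then 1 else 0) * b i' x)" by simp
qed

lemma lincomb_on_add:
  assumes "lincomb_on S K b \<phi>" "lincomb_on S K b \<psi>"
  shows "lincomb_on S K b (\<lambda>x. \<phi> x + \<psi> x)"
proof -
  obtain e e' where "\<forall>x\<in>S. \<phi> x = (\<Sum>i<K. e i * b i x)" "\<forall>x\<in>S. \<psi> x = (\<Sum>i<K. e' i * b i x)"
    using assms by (auto simp: lincomb_on_def)
  then show ?thesis
    unfolding lincomb_on_def by (intro exI[of _ "\<lambda>i. e i + e' i"]) (simp add: sum.distrib distrib_right)
qed

lemma lincomb_on_cmult:
  assumes "lincomb_on S K b \<phi>"
  shows "lincomb_on S K b (\<lambda>x. r * \<phi> x)"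
proof -
  obtain e where "\<forall>x\<in>S. \<phi> x = (\<Sum>i<K. e i * b i x)"
    using assms by (auto simp: lincomb_on_def)
  then show ?thesis
    unfolding lincomb_on_def by (intro exI[of _ "\<lambda>i. r * e i"]) (simp add: sum_distrib_left mult.assoc)
qed

lemma lincomb_on_diff:
  assumes "lincomb_on S K b \<phi>" "lincomb_on S K b \<psi>"
  shows "lincomb_on S K b (\<lambda>x. \<phi> x - \<psi> x)"
  using lincomb_on_add[OF assms(1) lincomb_on_cmult[OF assms(2), of "-1"]] by simp

lemma lincomb_on_mono:
  assumes "lincomb_on S K b \<phi>" "K \<le> K'"
  shows "lincomb_on S K' b \<phi>"
proof -
  obtain e where e: "\<forall>x\<in>S. \<phi> x = (\<Sum>i<K. e i * b i x)"
    using assms by (auto simp: lincomb_on_def)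
  have "(\<Sum>i<K'. (if i < K then e i else 0) * b i x) = (\<Sum>i<K. e i * b i x)" for x
    using assms(2) by (intro sum.mono_neutral_cong_right) auto
  with e show ?thesis
    unfolding lincomb_on_def by (intro exI[of _ "\<lambda>i. if i < K then e i else 0"]) simp
qed

lemma dyadic_value_lincomb_pairings:
  assumes "c < d" "l \<le> 2^n"
  shows "lincomb_on (C0 d) (d * 2^n) (\<lambda>i. pairing d (Suc i)) (\<lambda>\<gamma>. \<gamma> (real l / 2^n) c)"
  using assms(2)
proof (induction n arbitrary: l)
  case 0
  then have "l = 0 \<or> l = 1" by auto
  then consider "l = 0" | "l = 1" by blast
  then show ?case
  proof cases
    case 1
    then show ?thesis
      using C0_at_0[OF _ assms(1)] by (intro lincomb_on_cong[OF lincomb_on_zero]) simp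
  next
    case 2
    have "lincomb_on (C0 d) (d * 2^0) (\<lambda>i. pairing d (Suc i)) (pairing d (Suc c))"
      using assms(1) by (intro lincomb_on_basis) simp
    then show ?thesis
      using 2 assms(1) C0_at_0[OF _ assms(1)] pairing_level_0[of c d]
      by (elim lincomb_on_cong) simp
  qed
next
  case (Suc n)
  have mono: "d * 2^n \<le> d * 2^Suc n" by simp
  show ?case
  proof (cases "even l")
    case True
    then obtain l' where l': "l = 2 * l'" by blast
    with Suc.prems have "l' \<le> 2^n" by simp
    then have "lincomb_on (C0 d) (d * 2^Suc n) (\<lambda>i. pairing d (Suc i)) (\<lambda>\<gamma>. \<gamma> (real l' / 2^n) c)"
      by (rule lincomb_on_mono[OF Suc.IH mono])
    moreover have "real l / 2^Suc n = real l' / 2^n" using l' by simp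
    ultimately show ?thesis by simp
  next
    case False
    then obtain j where l: "l = 2 * j + 1" using oddE by blast
    with Suc.prems have j: "Suc j \<le> 2^n" by simp
    define i where "i = d * (2^n + j) + c"
    have i: "i div d = 2^n + j" "i mod d = c" "i < d * 2^Suc n"
    proof -
      show "i div d = 2^n + j" "i mod d = c" using assms(1) by (simp_all add: i_def)
      have "i < d * (2^n + Suc j)" using assms(1) by (simp add: i_def)
      also have "\<dots> \<le> d * 2^Suc n" by (rule mult_le_mono2) (use j in simp)
      finally show "i < d * 2^Suc n" .
    qed
    define A where "A = (2::real) powr (real n / 2)"
    have "A > 0" by (simp add: A_def)
    have midpoint: "\<gamma> (real l / 2^Suc n) c =
        (1 / (2 * A)) * pairing d (Suc i) \<gamma> + (1/2) * \<gamma> (real j / 2^n) c + (1/2) * \<gamma> (real (Suc j) / 2^n) c"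
      for \<gamma>
    proof -
      have grid: "real (2*j) / 2^(n+1) = real j / (2::real)^n"
        "real (2*j+2) / 2^(n+1) = real (Suc j) / (2::real)^n"
        "real l / 2^Suc n = real (2*j+1) / (2::real)^(n+1)"
        using l by (simp_all add: field_simps)
      have "pairing d (Suc i) \<gamma> = A * (2 * \<gamma> (real (2*j+1) / 2^(n+1)) c
          - \<gamma> (real j / 2^n) c - \<gamma> (real (Suc j) / 2^n) c)"
        using pairing_haar_mk[OF i(1) j, of \<gamma>] unfolding i(2) grid(1,2) A_def .
      then show ?thesis
        unfolding grid(3) using \<open>A > 0\<close> by (simp add: field_simps)
    qed
    have "lincomb_on (C0 d) (d * 2^Suc n) (\<lambda>i. pairing d (Suc i))
        (\<lambda>\<gamma>. (1 / (2 * A)) * pairing d (Suc i) \<gamma> + (1/2) * \<gamma> (real j / 2^n) c + (1/2) * \<gamma> (real (Suc j) / 2^n) c)"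
      using j i(3) by (intro lincomb_on_add lincomb_on_cmult lincomb_on_basis lincomb_on_mono[OF Suc.IH mono]) auto
    then show ?thesis
      unfolding midpoint .
  qed
qed

text \<open>The coordinates of the cylinder functions in \<open>Ycyl\<close> with times \<open>s i = (i + 1) / 2^n\<close>.\<close>
definition grid_value :: "nat \<Rightarrow> nat \<Rightarrow> nat \<Rightarrow> (real \<Rightarrow> nat \<Rightarrow> real) \<Rightarrow> real" where
  "grid_value d n j \<gamma> = \<gamma> (real (j div d + 1) / 2^n) (j mod d)"

lemma dyadic_value_lincomb_grid_values:
  assumes "c < d" "l \<le> 2^m" "m \<le> n"
  shows "lincomb_on (C0 d) (d * 2^n) (grid_value d n) (\<lambda>\<gamma>. \<gamma> (real l / 2^m) c)"
proof -
  define l' where "l' = l * 2^(n-m)"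
  have "(2::real)^n = 2^m * 2^(n-m)"
    using assms(3) by (simp flip: power_add)
  then have rescale: "real l / 2^m = real l' / 2^n"
    by (simp add: l'_def)
  have "(2::nat)^n = 2^m * 2^(n-m)"
    using assms(3) by (simp flip: power_add)
  then have "l' \<le> 2^n"
    using assms(2) by (simp add: l'_def)
  show ?thesis
  proof (cases "l' = 0")
    case True
    then show ?thesis
      unfolding rescale using C0_at_0[OF _ assms(1)] by (intro lincomb_on_cong[OF lincomb_on_zero]) simp
  next
    case False
    define j where "j = d * (l' - 1) + c"
    have "j < d * (l' - 1) + d" using assms(1) by (simp add: j_def)
    also have "\<dots> = d * l'" using False by (cases l') auto
    also have "\<dots> \<le> d * 2^n" using \<open>l' \<le> 2^n\<close> by simp
    finally have "lincomb_on (C0 d) (d * 2^n) (grid_value d n) (grid_value d n j)"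
      by (rule lincomb_on_basis)
    moreover have "grid_value d n j = (\<lambda>\<gamma>. \<gamma> (real l' / 2^n) c)"
      using assms(1) False by (simp add: grid_value_def j_def fun_eq_iff)
    ultimately show ?thesis
      unfolding rescale by simp
  qed
qed

lemma pairing_lincomb_grid_values:
  assumes "c < d" "i mod d = c" "i div d < 2^n"
  shows "lincomb_on (C0 d) (d * 2^n) (grid_value d n) (pairing d (Suc i))"
proof (cases "i div d = 0")
  case True
  have "lincomb_on (C0 d) (d * 2^n) (grid_value d n) (\<lambda>\<gamma>. \<gamma> (real (2^n) / 2^n) c)"
    using assms(1) by (intro dyadic_value_lincomb_grid_values) auto
  then show ?thesis
    using pairing_level_0[OF True] assms(2) C0_at_0[OF _ assms(1)] by (elim lincomb_on_cong) simp
next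
  case False
  then obtain m j where mj: "i div d + 1 = 2^m + Suc j" "Suc j \<le> 2^m"
    using haar_index_cases[of "i div d + 1"] by auto
  then have "(2::nat)^m < 2^n" using assms(3) by linarith
  then have "m + 1 \<le> n" using power_less_imp_less_exp[of "2::nat" m n] by simp
  have "2*j+2 \<le> 2^(m+1)" using mj(2) by simp
  with \<open>m + 1 \<le> n\<close> have "lincomb_on (C0 d) (d * 2^n) (grid_value d n) (\<lambda>\<gamma>. 2 powr (real m / 2) *
      (2 * \<gamma> (real (2*j+1) / 2^(m+1)) c - \<gamma> (real (2*j) / 2^(m+1)) c - \<gamma> (real (2*j+2) / 2^(m+1)) c))"
    by (intro lincomb_on_cmult lincomb_on_diff dyadic_value_lincomb_grid_values assms(1)) auto
  then show ?thesis
    using pairing_haar_mk[of i d m j] mj assms(2) by (elim lincomb_on_cong) simp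
qed

lemma Cinf_p_comp_lincomb:
  assumes f: "Cinf_p N f" and u: "\<forall>j<N. lincomb_on S K b (u j)"
  shows "\<exists>g. Cinf_p K g \<and>
    (\<forall>x\<in>S. f (\<lambda>j. if j < N then u j x else 0) = g (\<lambda>i. if i < K then b i x else 0))"
proof -
  obtain a where a: "\<And>j x. j < N \<Longrightarrow> x \<in> S \<Longrightarrow> u j x = (\<Sum>i<K. a j i * b i x)"
    using u unfolding lincomb_on_def by metis
  have "linmap a N K (\<lambda>i. if i < K then b i x else 0) = (\<lambda>j. if j < N then u j x else 0)" if "x \<in> S" for x
    using that by (auto simp: linmap_def a fun_eq_iff intro!: sum.cong)
  then show ?thesis
    using Cinf_p_comp_linmap[OF f, of K a] by (intro exI[of _ "\<lambda>y. f (linmap a N K y)"]) simp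
qed

section \<open>The two classes of cylinder functions\<close>

lemma Ytilde_memI:
  assumes f: "Cinf_p N f" and u: "\<forall>j<N. lincomb_on (C0 d) K (\<lambda>i. pairing d (Suc i)) (u j)"
    and "K \<ge> 1"
  shows "(\<lambda>\<gamma>. if \<gamma> \<in> C0 d then f (\<lambda>j. if j < N then u j \<gamma> else 0) else 0) \<in> Ytilde d"
proof -
  obtain g where "Cinf_p K g"
    and "\<forall>\<gamma>\<in>C0 d. f (\<lambda>j. if j < N then u j \<gamma> else 0) = g (\<lambda>i. if i < K then pairing d (Suc i) \<gamma> else 0)"
    using Cinf_p_comp_lincomb[OF f u] by blast
  with \<open>K \<ge> 1\<close> show ?thesis
    unfolding Ytilde_def by (intro CollectI exI[of _ K] exI[of _ g]) (simp add: fun_eq_iff)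
qed

lemma Ycyl_memI:
  assumes f: "Cinf_p N f" and u: "\<forall>j<N. lincomb_on (C0 d) (d * 2^n) (grid_value d n) (u j)"
  shows "(\<lambda>\<gamma>. if \<gamma> \<in> C0 d then f (\<lambda>j. if j < N then u j \<gamma> else 0) else 0) \<in> Ycyl d"
proof -
  define s where "s i = real (i + 1) / 2^n" for i
  obtain g where g: "Cinf_p (d * 2^n) g"
    and eq: "\<forall>\<gamma>\<in>C0 d. f (\<lambda>j. if j < N then u j \<gamma> else 0) =
      g (\<lambda>i. if i < d * 2^n then grid_value d n i \<gamma> else 0)"
    using Cinf_p_comp_lincomb[OF f u] by blast
  have "grid_value d n i \<gamma> = \<gamma> (s (i div d)) (i mod d)" for i \<gamma>
    by (simp add: grid_value_def s_def)
  with eq have "\<forall>\<gamma>\<in>C0 d. f (\<lambda>j. if j < N then u j \<gamma> else 0) =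
      g (\<lambda>i. if i < d * 2^n then \<gamma> (s (i div d)) (i mod d) else 0)"
    by (simp only:)
  then have F: "(\<lambda>\<gamma>. if \<gamma> \<in> C0 d then f (\<lambda>j. if j < N then u j \<gamma> else 0) else 0) =
      (\<lambda>\<gamma>. if \<gamma> \<in> C0 d then g (\<lambda>i. if i < d * 2^n then \<gamma> (s (i div d)) (i mod d) else 0) else 0)"
    by (simp add: fun_eq_iff)
  have s: "0 < s 0" "s (2^n - 1) = 1" "\<forall>i j. i < j \<and> j < 2^n \<longrightarrow> s i < s j"
    "\<forall>i<2^n. \<exists>l\<in>{1..(2::nat)^n}. s i = real l / 2^n"
    by (auto simp: s_def divide_strict_right_mono intro!: bexI[of _ "Suc i" for i])
  show ?thesis
    unfolding Ycyl_def
    by (intro CollectI exI[of _ "2^n"] exI[of _ n] exI[of _ s] exI[of _ g] conjI g F s) simp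
qed

lemma Ycyl_subset_Ytilde:
  assumes "d \<ge> 1"
  shows "Ycyl d \<subseteq> Ytilde d"
proof
  fix F assume "F \<in> Ycyl d"
  then obtain k n s f where s: "\<forall>i<k. \<exists>l\<in>{1..(2::nat)^n}. s i = real l / 2^n"
    and f: "Cinf_p (d * k) f"
    and F: "F = (\<lambda>\<gamma>. if \<gamma> \<in> C0 d then f (\<lambda>i. if i < d * k then \<gamma> (s (i div d)) (i mod d) else 0) else 0)"
    unfolding Ycyl_def by blast
  have "lincomb_on (C0 d) (d * 2^n) (\<lambda>i. pairing d (Suc i)) (\<lambda>\<gamma>. \<gamma> (s (j div d)) (j mod d))"
    if "j < d * k" for j
  proof -
    have "j div d < k" using that by (intro less_mult_imp_div_less) (simp add: mult.commute)
    with s obtain l where "l \<le> 2^n" "s (j div d) = real l / 2^n" by force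
    with assms show ?thesis by (simp add: dyadic_value_lincomb_pairings)
  qed
  with assms show "F \<in> Ytilde d"
    unfolding F by (intro Ytilde_memI[OF f, where K = "d * 2^n"]) auto
qed

lemma Ytilde_subset_Ycyl:
  assumes "d \<ge> 1"
  shows "Ytilde d \<subseteq> Ycyl d"
proof
  fix F assume "F \<in> Ytilde d"
  then obtain k f where f: "Cinf_p k f"
    and F: "F = (\<lambda>\<gamma>. if \<gamma> \<in> C0 d then f (\<lambda>i. if i < k then pairing d (Suc i) \<gamma> else 0) else 0)"
    unfolding Ytilde_def by blast
  have "lincomb_on (C0 d) (d * 2^k) (grid_value d k) (pairing d (Suc i))" if "i < k" for i
  proof (rule pairing_lincomb_grid_values)
    show "i mod d < d" using assms by simp
    show "i div d < 2^k" using that less_exp[of k] div_le_dividend[of i d] by linarith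
  qed simp
  then show "F \<in> Ycyl d"
    unfolding F by (intro Ycyl_memI[OF f]) auto
qed

theorem lemma1p1:
  fixes d :: nat
  assumes "d \<ge> 1"
  shows "Ycyl d = Ytilde d"
  using Ycyl_subset_Ytilde[OF assms] Ytilde_subset_Ycyl[OF assms] by (rule equalityI)

end
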